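(* Let $T=(V_T,E_T)$ be a finite tree, $r\in V_T$, and $Q\subseteq V_T$ non-empty. Root $T$ at $r$, let $V_Q$ be the set of nodes whose subtree contains a node of $Q$, $T_Q$ the subtree induced by $V_Q$, $A_Q=\{u\in V_Q:\deg_{T_Q}(u)\ge 3\}$ and $Q'=Q\cup A_Q$. Let $Z=(V_Z,E_Z)$ be a connected subgraph of $T$ with $Q'\cap V_Z\ne\emptyset$. Then $Z$ has one or two $(Q'\cap V_Z)$-centroids.
   Context: For a tree $Z$ and a set $Q\subseteq V_Z$, a node $u\in Q$ is a $Q$-centroid of $Z$ if every connected component of $Z-u$ contains at most $|Q|/2$ nodes of $Q$. *)

theory Defs
  imports Complex_Main
begin

definition ugraph :: "'a set \<Rightarrow> 'a set set \<Rightarrow> bool" where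
  "ugraph V E \<longleftrightarrow> finite V \<and>
     (\<forall>e\<in>E. \<exists>u v. e = {u, v} \<and> u \<noteq> v \<and> u \<in> V \<and> v \<in> V)"

definition walk :: "'a set \<Rightarrow> 'a set set \<Rightarrow> 'a list \<Rightarrow> bool" where
  "walk V E xs \<longleftrightarrow> xs \<noteq> [] \<and> set xs \<subseteq> V \<and>
     (\<forall>i. Suc i < length xs \<longrightarrow> {xs ! i, xs ! Suc i} \<in> E)"

definition is_path :: "'a set \<Rightarrow> 'a set set \<Rightarrow> 'a \<Rightarrow> 'a \<Rightarrow> 'a list \<Rightarrow> bool" where
  "is_path V E u v xs \<longleftrightarrow> walk V E xs \<and> distinct xs \<and> hd xs = u \<and> last xs = v"

definition reachable :: "'a set \<Rightarrow> 'a set set \<Rightarrow> 'a \<Rightarrow> 'a \<Rightarrow> bool" where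
  "reachable V E u v \<longleftrightarrow> (\<exists>xs. walk V E xs \<and> hd xs = u \<and> last xs = v)"

definition connected_graph :: "'a set \<Rightarrow> 'a set set \<Rightarrow> bool" where
  "connected_graph V E \<longleftrightarrow> V \<noteq> {} \<and> (\<forall>u\<in>V. \<forall>v\<in>V. reachable V E u v)"

definition is_cycle :: "'a set \<Rightarrow> 'a set set \<Rightarrow> 'a list \<Rightarrow> bool" where
  "is_cycle V E xs \<longleftrightarrow> walk V E xs \<and> distinct xs \<and> length xs \<ge> 3 \<and> {last xs, hd xs} \<in> E"

definition tree :: "'a set \<Rightarrow> 'a set set \<Rightarrow> bool" where
  "tree V E \<longleftrightarrow> ugraph V E \<and> connected_graph V E \<and> \<not> (\<exists>xs. is_cycle V E xs)"

definition connected_subgraph :: "'a set \<Rightarrow> 'a set set \<Rightarrow> 'a set \<Rightarrow> 'a set set \<Rightarrow> bool" where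
  "connected_subgraph V E VZ EZ \<longleftrightarrow> VZ \<subseteq> V \<and> EZ \<subseteq> E \<and> ugraph VZ EZ \<and> connected_graph VZ EZ"

text \<open>Rooting at r: the subtree of u consists of the nodes w such that u lies on the
  (unique) path from r to w.\<close>
definition subtree_nodes :: "'a set \<Rightarrow> 'a set set \<Rightarrow> 'a \<Rightarrow> 'a \<Rightarrow> 'a set" where
  "subtree_nodes V E r u = {w \<in> V. \<forall>xs. is_path V E r w xs \<longrightarrow> u \<in> set xs}"

definition V_Q :: "'a set \<Rightarrow> 'a set set \<Rightarrow> 'a \<Rightarrow> 'a set \<Rightarrow> 'a set" where
  "V_Q V E r Q = {u \<in> V. subtree_nodes V E r u \<inter> Q \<noteq> {}}"

definition induced_edges :: "'a set set \<Rightarrow> 'a set \<Rightarrow> 'a set set" where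
  "induced_edges E W = {e \<in> E. e \<subseteq> W}"

definition degree :: "'a set \<Rightarrow> 'a set set \<Rightarrow> 'a \<Rightarrow> nat" where
  "degree V E u = card {v \<in> V. {u, v} \<in> E}"

definition A_Q :: "'a set \<Rightarrow> 'a set set \<Rightarrow> 'a \<Rightarrow> 'a set \<Rightarrow> 'a set" where
  "A_Q V E r Q = {u \<in> V_Q V E r Q.
      degree (V_Q V E r Q) (induced_edges E (V_Q V E r Q)) u \<ge> 3}"

definition components :: "'a set \<Rightarrow> 'a set set \<Rightarrow> 'a set set" where
  "components V E = (\<lambda>v. {w \<in> V. reachable V E v w}) ` V"

definition delete_vertex_edges :: "'a set set \<Rightarrow> 'a \<Rightarrow> 'a set set" where
  "delete_vertex_edges E u = {e \<in> E. u \<notin> e}"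

definition is_Q_centroid :: "'a set \<Rightarrow> 'a set set \<Rightarrow> 'a set \<Rightarrow> 'a \<Rightarrow> bool" where
  "is_Q_centroid VZ EZ Q u \<longleftrightarrow> u \<in> Q \<and> u \<in> VZ \<and>
     (\<forall>C \<in> components (VZ - {u}) (delete_vertex_edges EZ u).
        real (card (C \<inter> Q)) \<le> real (card Q) / 2)"

end

(*
  Write P for the set Q' \<inter> V_Z. Two distinct P-centroids u and v of the tree Z split P
  exactly in half between the side of u containing v and the side of v containing u, and no
  node of P lies on both sides; a third centroid would lie on both, so there are at most two.
  For existence, move along edges towards a side of Z holding at least half of P. The sides
  shrink, so the walk stops, and it can only stop at a centroid provided that removing a node
  outside P never leaves P spread over three or more components. That holds for Q': a node
  x of Z outside Q' sees P only through its parent in T (if x is not in V_Q), or only through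
  its neighbours in T_Q, of which there are at most two since x is not in A_Q.
*)

theory Submission
  imports Defs
begin

section \<open>Walks and reachability\<close>

lemma walk_Nil [simp]: "\<not> walk V E []"
  by (simp add: walk_def)

lemma walk_singleton [simp]: "walk V E [x] \<longleftrightarrow> x \<in> V"
  by (simp add: walk_def)

lemma walk_Cons_Cons [simp]:
  "walk V E (x # y # xs) \<longleftrightarrow> x \<in> V \<and> {x, y} \<in> E \<and> walk V E (y # xs)"
  unfolding walk_def by (auto simp: nth_Cons split: nat.splits)

lemma walk_set: "walk V E xs \<Longrightarrow> set xs \<subseteq> V"
  by (simp add: walk_def)

lemma walk_append_Cons:
  "walk V E (xs @ y # ys) \<longleftrightarrow> walk V E (xs @ [y]) \<and> walk V E (y # ys)"
  by (induction xs rule: induct_list012) (auto dest: walk_set)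

lemma walk_join:
  assumes xs: "walk V E xs" and ys: "walk V E ys" and "last xs = hd ys"
  shows "walk V E (xs @ tl ys)"
proof -
  have "xs = butlast xs @ [last xs]"
    using xs by (metis walk_Nil append_butlast_last_id)
  moreover have "ys = last xs # tl ys"
    using ys \<open>last xs = hd ys\<close> by (metis walk_Nil list.collapse)
  ultimately show ?thesis
    using xs ys walk_append_Cons[of V E "butlast xs" "last xs" "tl ys"] by (metis append.assoc append_Cons append_Nil)
qed

lemma walk_snoc:
  assumes "walk V E xs" "{last xs, y} \<in> E" "y \<in> V"
  shows "walk V E (xs @ [y])"
proof -
  have "last xs \<in> V" using assms(1) walk_set by (metis walk_Nil last_in_set subsetD)
  then show ?thesis using walk_join[OF assms(1), of "[last xs, y]"] assms by simp
qed

lemma walk_rev: "walk V E xs \<Longrightarrow> walk V E (rev xs)"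
proof (induction xs rule: induct_list012)
  case (3 x y zs)
  then show ?case
    using walk_snoc[of V E "rev zs @ [y]" x] by (auto simp: insert_commute)
qed auto

lemma walk_mono: "walk V E xs \<Longrightarrow> V \<subseteq> V' \<Longrightarrow> E \<subseteq> E' \<Longrightarrow> walk V' E' xs"
  by (auto simp: walk_def)

lemma reachable_refl: "x \<in> V \<Longrightarrow> reachable V E x x"
  unfolding reachable_def by (intro exI[of _ "[x]"]) auto

lemma reachable_sym: "reachable V E x y \<Longrightarrow> reachable V E y x"
  unfolding reachable_def by (metis walk_rev hd_rev last_rev)

lemma reachable_trans: "reachable V E x y \<Longrightarrow> reachable V E y z \<Longrightarrow> reachable V E x z"
  unfolding reachable_def
proof (elim exE conjE)
  fix xs ys assume xs: "walk V E xs" "hd xs = x" "last xs = y"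
    and ys: "walk V E ys" "hd ys = y" "last ys = z"
  have "last (xs @ tl ys) = z"
    using xs ys by (cases ys) (auto simp: walk_def)
  then show "\<exists>zs. walk V E zs \<and> hd zs = x \<and> last zs = z"
    using walk_join[OF xs(1) ys(1)] xs ys by (intro exI[of _ "xs @ tl ys"]) (auto simp: walk_def)
qed

lemma reachable_mono: "reachable V E x y \<Longrightarrow> V \<subseteq> V' \<Longrightarrow> E \<subseteq> E' \<Longrightarrow> reachable V' E' x y"
  unfolding reachable_def by (metis walk_mono)

lemma reachable_imp_path: "reachable V E u v \<Longrightarrow> \<exists>xs. is_path V E u v xs"
proof -
  have "walk V E xs \<Longrightarrow> \<exists>ys. is_path V E (hd xs) (last xs) ys" for xs
  proof (induction xs)
    case (Cons x xs)
    show ?case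
    proof (cases "xs = []")
      case True
      then show ?thesis using Cons.prems by (intro exI[of _ "[x]"]) (simp add: is_path_def)
    next
      case False
      then obtain y zs where "xs = y # zs" by (cases xs) auto
      then have x: "x \<in> V" "{x, hd xs} \<in> E" "walk V E xs" using Cons.prems by auto
      then obtain ys where ys: "is_path V E (hd xs) (last xs) ys" using Cons.IH by blast
      show ?thesis
      proof (cases "x \<in> set ys")
        case True
        then obtain p s where ps: "ys = p @ x # s" by (meson split_list)
        then show ?thesis
          using ys False walk_append_Cons[of V E p x s]
          by (intro exI[of _ "x # s"]) (auto simp: is_path_def)
      next
        case notin: False
        obtain y ys' where "ys = y # ys'" using ys by (metis is_path_def walk_Nil list.exhaust)
        then have "walk V E (x # ys)" using x ys by (auto simp: is_path_def)
        then show ?thesis using ys notin False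
          by (intro exI[of _ "x # ys"]) (auto simp: is_path_def)
      qed
    qed
  qed simp
  then show "reachable V E u v \<Longrightarrow> \<exists>xs. is_path V E u v xs"
    unfolding reachable_def by blast
qed

section \<open>Branches at a vertex\<close>

definition branch :: "'a set \<Rightarrow> 'a set set \<Rightarrow> 'a \<Rightarrow> 'a \<Rightarrow> 'a set" where
  "branch V E u v = {w \<in> V - {u}. reachable (V - {u}) (delete_vertex_edges E u) v w}"

lemma components_delete_vertex:
  "components (V - {u}) (delete_vertex_edges E u) = branch V E u ` (V - {u})"
  unfolding components_def branch_def by simp

lemma branch_subset: "branch V E u v \<subseteq> V - {u}"
  by (auto simp: branch_def)

lemma finite_branch: "finite V \<Longrightarrow> finite (branch V E u v)"
  using branch_subset finite_subset by (metis finite_Diff)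

lemma self_in_branch: "v \<in> V \<Longrightarrow> v \<noteq> u \<Longrightarrow> v \<in> branch V E u v"
  by (auto simp: branch_def intro: reachable_refl)

lemma branch_eq: "w \<in> branch V E u v \<Longrightarrow> branch V E u w = branch V E u v"
  unfolding branch_def by (auto intro: reachable_trans reachable_sym)

lemma branches_disjoint: "branch V E u a \<noteq> branch V E u b \<Longrightarrow> branch V E u a \<inter> branch V E u b = {}"
  by (metis branch_eq disjoint_iff)

lemma pairwise_disjnt_branches: "pairwise disjnt (branch V E u ` S)"
proof (rule pairwiseI)
  fix C1 C2 assume "C1 \<in> branch V E u ` S" "C2 \<in> branch V E u ` S" "C1 \<noteq> C2"
  then obtain a b where "C1 = branch V E u a" "C2 = branch V E u b" by blast
  then show "disjnt C1 C2"
    using branches_disjoint[of V E u a b] \<open>C1 \<noteq> C2\<close> by (simp add: disjnt_def)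
qed

lemma branch_edge_closed:
  assumes "a \<in> branch V E u v" "{a, b} \<in> E" "b \<in> V" "b \<noteq> u"
  shows "b \<in> branch V E u v"
proof -
  have "a \<in> V - {u}" using assms(1) branch_subset by fast
  then have "walk (V - {u}) (delete_vertex_edges E u) [a, b]"
    using assms by (auto simp: delete_vertex_edges_def)
  then have "reachable (V - {u}) (delete_vertex_edges E u) a b"
    unfolding reachable_def by (intro exI[of _ "[a, b]"]) auto
  then show ?thesis using assms unfolding branch_def by (auto intro: reachable_trans)
qed

lemma branch_mono: "V \<subseteq> V' \<Longrightarrow> E \<subseteq> E' \<Longrightarrow> branch V E u v \<subseteq> branch V' E' u v"
  unfolding branch_def delete_vertex_edges_def
  by (auto elim!: reachable_mono)

lemma walk_into_branch:
  assumes "walk V E xs" "last xs = v" "u \<in> V" "v \<in> V" "u \<noteq> v"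
  shows "hd xs \<in> branch V E u v \<union> branch V E v u"
  using assms
proof (induction xs rule: induct_list012)
  case (3 a b zs)
  then have "b \<in> branch V E u v \<union> branch V E v u" "{b, a} \<in> E" "a \<in> V"
    by (auto simp: insert_commute)
  then show ?case
    using self_in_branch branch_edge_closed "3.prems" by (metis UnE UnI1 UnI2 list.sel(1))
qed (auto intro: self_in_branch)

lemma branch_Un_branch:
  assumes "connected_graph V E" "u \<in> V" "v \<in> V" "u \<noteq> v" "w \<in> V"
  shows "w \<in> branch V E u v \<union> branch V E v u"
  using assms walk_into_branch unfolding connected_graph_def reachable_def by metis

lemma neighbour_in_branch:
  assumes "connected_graph V E" "x \<in> V" "v \<in> V" "v \<noteq> x"
  obtains y where "{x, y} \<in> E" "branch V E x y = branch V E x v"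
proof -
  have "walk V E xs \<Longrightarrow> last xs = x \<Longrightarrow> hd xs \<noteq> x \<Longrightarrow>
    \<exists>y. {x, y} \<in> E \<and> y \<in> branch V E x (hd xs)" for xs
  proof (induction xs rule: induct_list012)
    case (3 a b zs)
    show ?case
    proof (cases "b = x")
      case True
      then show ?thesis using 3 self_in_branch[of a V x E] by (auto simp: insert_commute)
    next
      case False
      then obtain y where y: "{x, y} \<in> E" "y \<in> branch V E x b" using 3 by auto
      have "b \<in> branch V E x a"
        using branch_edge_closed[of a V E x a b] self_in_branch[of a V x E] 3 False
        by (auto dest: walk_set)
      then show ?thesis using y branch_eq by fastforce
    qed
  qed auto
  moreover obtain xs where "walk V E xs" "hd xs = v" "last xs = x"
    using assms unfolding connected_graph_def reachable_def by blast
  ultimately show ?thesis using assms that branch_eq by metis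
qed

lemma ugraph_edgeD: "ugraph V E \<Longrightarrow> {a, b} \<in> E \<Longrightarrow> a \<noteq> b \<and> a \<in> V \<and> b \<in> V"
  unfolding ugraph_def by (metis doubleton_eq_iff)

definition Q_components :: "'a set \<Rightarrow> 'a set set \<Rightarrow> 'a set \<Rightarrow> 'a \<Rightarrow> 'a set set" where
  "Q_components W F Q x = {C \<in> components (W - {x}) (delete_vertex_edges F x). C \<inter> Q \<noteq> {}}"

lemma card_Q_components_le_neighbours:
  assumes "ugraph W F" "connected_graph W F" "x \<in> W"
  shows "card (Q_components W F Q x) \<le> card {y. {x, y} \<in> F \<and> branch W F x y \<inter> Q \<noteq> {}}"
    (is "_ \<le> card ?N")
proof -
  have "?N \<subseteq> W" using ugraph_edgeD[OF assms(1)] by blast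
  then have "finite ?N" using assms(1) finite_subset unfolding ugraph_def by blast
  moreover have "Q_components W F Q x \<subseteq> branch W F x ` ?N"
  proof
    fix C assume "C \<in> Q_components W F Q x"
    then obtain v where v: "v \<in> W - {x}" "C = branch W F x v" "C \<inter> Q \<noteq> {}"
      unfolding Q_components_def components_delete_vertex by auto
    then obtain y where "{x, y} \<in> F" "branch W F x y = C"
      using neighbour_in_branch[OF assms(2,3)] by (metis DiffE insertI1)
    then show "C \<in> branch W F x ` ?N" using v by auto
  qed
  ultimately show ?thesis by (meson card_image_le card_mono finite_imageI le_trans)
qed

section \<open>Forests\<close>

locale forest =
  fixes V :: "'a set" and E :: "'a set set"
  assumes ugraph: "ugraph V E"
    and no_cycle: "\<nexists>xs. is_cycle V E xs"
begin

lemma edgeD: "{a, b} \<in> E \<Longrightarrow> a \<noteq> b \<and> a \<in> V \<and> b \<in> V"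
  using ugraph ugraph_edgeD by metis

lemma edge_is_bridge:
  assumes e: "{u, x} \<in> E"
  shows "\<not> reachable V (E - {{u, x}}) x u"
proof
  assume "reachable V (E - {{u, x}}) x u"
  then obtain ys where ys: "is_path V (E - {{u, x}}) x u ys"
    using reachable_imp_path by metis
  have "length ys \<ge> 3"
  proof (cases ys rule: remdups_adj.cases)
    case 1
    then show ?thesis using ys by (simp add: is_path_def)
  next
    case (2 y)
    then show ?thesis using ys edgeD[OF e] by (auto simp: is_path_def)
  next
    case (3 y z zs)
    then show ?thesis using ys by (cases zs) (auto simp: is_path_def insert_commute)
  qed
  moreover have "walk V E ys" using ys by (auto simp: is_path_def intro: walk_mono)
  ultimately have "is_cycle V E ys"
    using ys e by (auto simp: is_cycle_def is_path_def insert_commute)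
  then show False using no_cycle by blast
qed

lemma neighbours_in_distinct_branches:
  assumes "{x, a} \<in> E" "{x, b} \<in> E" "a \<noteq> b"
  shows "b \<notin> branch V E x a"
proof
  assume "b \<in> branch V E x a"
  then obtain ws where ws: "walk (V - {x}) (delete_vertex_edges E x) ws" "hd ws = a" "last ws = b"
    unfolding branch_def reachable_def by blast
  have "walk V (E - {{x, a}}) ws"
    by (rule walk_mono[OF ws(1)]) (auto simp: delete_vertex_edges_def)
  moreover have "{last ws, x} \<in> E - {{x, a}}"
    using assms ws(3) edgeD[OF assms(2)] by (auto simp: insert_commute doubleton_eq_iff)
  ultimately have "walk V (E - {{x, a}}) (ws @ [x])"
    using walk_snoc edgeD[OF assms(1)] by metis
  moreover have "hd (ws @ [x]) = a" using ws by (cases ws) auto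
  ultimately have "reachable V (E - {{x, a}}) a x"
    unfolding reachable_def by (metis last_snoc)
  then show False using edge_is_bridge[OF assms(1)] by blast
qed

lemma branches_across_edge_disjoint:
  assumes e: "{u, x} \<in> E"
  shows "branch V E u x \<inter> branch V E x u = {}"
proof (rule equals0I)
  fix w assume "w \<in> branch V E u x \<inter> branch V E x u"
  then have xw: "reachable (V - {u}) (delete_vertex_edges E u) x w"
    and wu: "reachable (V - {x}) (delete_vertex_edges E x) w u"
    unfolding branch_def by (auto intro: reachable_sym)
  have "reachable V (E - {{u, x}}) x w"
    by (rule reachable_mono[OF xw]) (auto simp: delete_vertex_edges_def)
  moreover have "reachable V (E - {{u, x}}) w u"
    by (rule reachable_mono[OF wu]) (auto simp: delete_vertex_edges_def)
  ultimately have "reachable V (E - {{u, x}}) x u" by (rule reachable_trans)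
  then show False using edge_is_bridge[OF e] by blast
qed

lemma walk_entering_branch:
  assumes "{x, y} \<in> E"
  shows "walk V E xs \<Longrightarrow> hd xs \<notin> branch V E x y \<Longrightarrow> last xs \<in> branch V E x y \<Longrightarrow>
    x \<in> set xs \<and> y \<in> set xs"
proof (induction xs rule: induct_list012)
  case (3 a b zs)
  show ?case
  proof (cases "b \<in> branch V E x y")
    case True
    have ab: "{b, a} \<in> E" "a \<in> V" "a \<notin> branch V E x y"
      using "3.prems" by (auto simp: insert_commute)
    then have "a = x" using branch_edge_closed[OF True ab(1,2)] by blast
    moreover have "b = y"
      using neighbours_in_distinct_branches[OF assms, of b] ab(1) True \<open>a = x\<close>
      by (auto simp: insert_commute)
    ultimately show ?thesis by simp
  next
    case False
    then show ?thesis using "3.IH" "3.prems" by simp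
  qed
qed auto

end

lemma forest_if_tree: "tree V E \<Longrightarrow> forest V E"
  by (simp add: tree_def forest_def)

lemma tree_if_connected_subgraph:
  assumes "tree V E" "connected_subgraph V E W F"
  shows "tree W F"
proof -
  have "is_cycle W F xs \<Longrightarrow> is_cycle V E xs" for xs
    using assms(2) unfolding connected_subgraph_def is_cycle_def by (auto intro: walk_mono)
  then show ?thesis
    using assms unfolding tree_def connected_subgraph_def by blast
qed

section \<open>Rooted trees\<close>

lemma self_in_subtree_nodes: "q \<in> V \<Longrightarrow> q \<in> subtree_nodes V E r q"
  unfolding subtree_nodes_def is_path_def by (auto simp: walk_def)

lemma subtree_nodes_trans:
  assumes "u \<in> subtree_nodes V E r y"
  shows "subtree_nodes V E r u \<subseteq> subtree_nodes V E r y"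
proof
  fix w assume w: "w \<in> subtree_nodes V E r u"
  have "y \<in> set ps" if ps: "is_path V E r w ps" for ps
  proof -
    have "u \<in> set ps" using w ps unfolding subtree_nodes_def by blast
    then obtain p s where ps_split: "ps = p @ u # s" by (meson split_list)
    have "walk V E (p @ [u])" "distinct (p @ [u])" "hd (p @ [u]) = r"
      using ps ps_split walk_append_Cons[of V E p u s] unfolding is_path_def by (cases p; simp)+
    then have "is_path V E r u (p @ [u])" by (simp add: is_path_def)
    then show ?thesis using assms ps_split unfolding subtree_nodes_def by auto
  qed
  then show "w \<in> subtree_nodes V E r y" using w unfolding subtree_nodes_def by auto
qed

lemma V_Q_upward_closed:
  assumes "u \<in> subtree_nodes V E r y" "u \<in> V_Q V E r Q" "y \<in> V"
  shows "y \<in> V_Q V E r Q"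
  using subtree_nodes_trans[OF assms(1)] assms(2,3) unfolding V_Q_def by blast

lemma Q_subset_V_Q: "Q \<subseteq> V \<Longrightarrow> Q \<subseteq> V_Q V E r Q"
proof
  fix q assume "Q \<subseteq> V" "q \<in> Q"
  then have "q \<in> V" by blast
  moreover have "q \<in> subtree_nodes V E r q" using \<open>q \<in> V\<close> by (rule self_in_subtree_nodes)
  ultimately show "q \<in> V_Q V E r Q" unfolding V_Q_def using \<open>q \<in> Q\<close> by blast
qed

lemma A_Q_subset_V_Q: "A_Q V E r Q \<subseteq> V_Q V E r Q"
  unfolding A_Q_def by (rule Collect_restrict)

context forest
begin

lemma branch_without_root_in_subtree:
  assumes "{x, y} \<in> E" "r \<notin> branch V E x y" "w \<in> branch V E x y"
  shows "w \<in> subtree_nodes V E r y" "w \<in> subtree_nodes V E r x"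
proof -
  have "w \<in> V" using assms(3) branch_subset by fast
  moreover have "x \<in> set ps \<and> y \<in> set ps" if "is_path V E r w ps" for ps
    using walk_entering_branch[OF assms(1), of ps] that assms(2,3) unfolding is_path_def by auto
  ultimately show "w \<in> subtree_nodes V E r y" "w \<in> subtree_nodes V E r x"
    unfolding subtree_nodes_def by auto
qed

lemma child_in_parent_subtree:
  assumes "{x, p} \<in> E" "r \<in> branch V E x p"
  shows "x \<in> subtree_nodes V E r p"
proof -
  have "r \<notin> branch V E p x"
    using branches_across_edge_disjoint[OF assms(1)] assms(2) by blast
  moreover have "x \<in> branch V E p x" using edgeD[OF assms(1)] self_in_branch by metis
  ultimately show ?thesis
    using branch_without_root_in_subtree[of p x] assms(1) by (simp add: insert_commute)
qed

lemma parent_unique: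
  assumes "{x, p1} \<in> E" "{x, p2} \<in> E" "r \<in> branch V E x p1" "r \<in> branch V E x p2"
  shows "p1 = p2"
proof (rule ccontr)
  assume "p1 \<noteq> p2"
  moreover have "p2 \<in> branch V E x p1"
    using branch_eq assms(3,4) self_in_branch edgeD[OF assms(2)] by metis
  ultimately show False using neighbours_in_distinct_branches[OF assms(1,2)] by blast
qed

lemma neighbour_towards_V_Q:
  assumes e: "{x, y} \<in> E" and q: "q \<in> branch V E x y" "q \<in> V_Q V E r Q"
  shows "x \<in> V_Q V E r Q \<Longrightarrow> y \<in> V_Q V E r Q"
    and "x \<notin> V_Q V E r Q \<Longrightarrow> r \<in> branch V E x y"
proof -
  have xy: "x \<in> V" "y \<in> V" using edgeD[OF e] by auto
  show "y \<in> V_Q V E r Q" if "x \<in> V_Q V E r Q"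
  proof (cases "r \<in> branch V E x y")
    case True
    then show ?thesis using child_in_parent_subtree[OF e] V_Q_upward_closed that xy by metis
  next
    case False
    then show ?thesis using branch_without_root_in_subtree[OF e False q(1)] V_Q_upward_closed q(2) xy
      by metis
  qed
  show "r \<in> branch V E x y" if "x \<notin> V_Q V E r Q"
    using branch_without_root_in_subtree[OF e _ q(1)] V_Q_upward_closed q(2) xy that by metis
qed

lemma card_Q'_components_le_2:
  assumes Z: "connected_subgraph V E W F" and "Q \<subseteq> V"
    and x: "x \<in> W" "x \<notin> Q \<union> A_Q V E r Q"
  shows "card (Q_components W F ((Q \<union> A_Q V E r Q) \<inter> W) x) \<le> 2"
proof -
  let ?VQ = "V_Q V E r Q" and ?P = "(Q \<union> A_Q V E r Q) \<inter> W"
  let ?N = "{y. {x, y} \<in> F \<and> branch W F x y \<inter> ?P \<noteq> {}}"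
  have WF: "W \<subseteq> V" "F \<subseteq> E" "ugraph W F" "connected_graph W F"
    using Z by (auto simp: connected_subgraph_def)
  have P_VQ: "?P \<subseteq> ?VQ" using Q_subset_V_Q[OF \<open>Q \<subseteq> V\<close>] A_Q_subset_V_Q[of V E r Q] by blast
  have N: "{x, y} \<in> E \<and> (\<exists>q. q \<in> branch V E x y \<and> q \<in> ?VQ)" if y: "y \<in> ?N" for y
  proof -
    obtain q where "{x, y} \<in> F" "q \<in> branch W F x y" "q \<in> ?P" using y by blast
    moreover have "q \<in> branch V E x y" using branch_mono[OF WF(1,2)] calculation(2) by (rule subsetD)
    ultimately show ?thesis using WF(2) P_VQ by blast
  qed
  have "card ?N \<le> 2"
  proof (cases "x \<in> ?VQ")
    case True
    let ?D = "{v \<in> ?VQ. {x, v} \<in> induced_edges E ?VQ}"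
    have "?N \<subseteq> ?D"
    proof
      fix y assume "y \<in> ?N"
      then obtain q where e: "{x, y} \<in> E" and q: "q \<in> branch V E x y" "q \<in> ?VQ" using N by blast
      then have "y \<in> ?VQ" using neighbour_towards_V_Q(1)[OF e q True] by blast
      then show "y \<in> ?D" using True e unfolding induced_edges_def by simp
    qed
    moreover have "finite ?D"
      using ugraph finite_subset[of ?D V] unfolding ugraph_def V_Q_def by blast
    ultimately have "card ?N \<le> card ?D" by (rule card_mono[rotated])
    moreover have "\<not> 3 \<le> card ?D"
      using True x(2) unfolding A_Q_def degree_def by blast
    ultimately show ?thesis by linarith
  next
    case False
    have "r \<in> branch V E x y" "{x, y} \<in> E" if "y \<in> ?N" for y
      using N[OF that] neighbour_towards_V_Q(2) False by blast+
    then have "\<forall>y1\<in>?N. \<forall>y2\<in>?N. y1 = y2" using parent_unique by blast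
    then show ?thesis using card_le_Suc0_iff_eq[of ?N] by (cases "finite ?N") auto
  qed
  then show ?thesis
    using card_Q_components_le_neighbours[OF WF(3,4) x(1), of ?P] by linarith
qed

end

section \<open>Centroids\<close>

lemma other_part_holds_half:
  fixes K :: "'a set set"
  assumes fin: "finite P" "finite K" and "P \<noteq> {}" and "card K \<le> 2"
    and cover: "P \<subseteq> \<Union>K" and disj: "pairwise disjnt K"
    and light: "2 * card (C0 \<inter> P) \<le> card P"
  shows "\<exists>C \<in> K. C \<noteq> C0 \<and> card P \<le> 2 * card (C \<inter> P)"
proof (rule ccontr)
  let ?f = "\<lambda>C. 2 * card (C \<inter> P)"
  assume contra: "\<not> ?thesis"
  have "\<forall>C1\<in>K. \<forall>C2\<in>K. C1 \<noteq> C2 \<longrightarrow> (C1 \<inter> P) \<inter> (C2 \<inter> P) = {}"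
    using disj unfolding pairwise_def disjnt_def by blast
  then have "card (\<Union>C \<in> K. C \<inter> P) = (\<Sum>C\<in>K. card (C \<inter> P))"
    using card_UN_disjoint[OF fin(2), of "\<lambda>C. C \<inter> P"] fin(1) by simp
  moreover have "(\<Union>C \<in> K. C \<inter> P) = P" using cover by blast
  ultimately have "card P = (\<Sum>C\<in>K. card (C \<inter> P))" by simp
  then have sum: "2 * card P = (\<Sum>C\<in>K. ?f C)"
    by (simp add: sum_distrib_left)
  have strict: "?f C < card P" if "C \<in> K" "C \<noteq> C0" for C
    using that contra by (auto simp: not_le)
  have bound: "?f C \<le> card P" if "C \<in> K" for C
    using strict[OF that] light by (cases "C = C0") auto
  have "2 * card P \<le> card K * card P"
    unfolding sum using sum_bounded_above[of K ?f "card P"] bound by simp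
  then have "card K = 2" using \<open>card K \<le> 2\<close> \<open>P \<noteq> {}\<close> fin(1) by (simp add: card_gt_0_iff)
  then obtain C where C: "C \<in> K" "C \<noteq> C0"
    by (metis card_2_iff insertCI)
  have "(\<Sum>C\<in>K. ?f C) < (\<Sum>C\<in>K. card P)"
  proof (rule sum_strict_mono_ex1[OF fin(2)])
    show "\<forall>C\<in>K. ?f C \<le> card P" using bound by blast
    show "\<exists>C\<in>K. ?f C < card P" using strict C by blast
  qed
  then show False using sum \<open>card K = 2\<close> by simp
qed

locale tree_with_terminals =
  fixes W :: "'a set" and F :: "'a set set" and P :: "'a set"
  assumes tree: "tree W F" and P_subset: "P \<subseteq> W" and P_nonempty: "P \<noteq> {}"
begin

lemma forest: "forest W F"
  using tree by (rule forest_if_tree)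

lemma connected: "connected_graph W F"
  using tree by (simp add: tree_def)

lemma finite_W: "finite W"
  using tree by (simp add: tree_def ugraph_def)

lemma finite_P: "finite P"
  using finite_W P_subset by (rule finite_subset[rotated])

lemma is_Q_centroid_iff:
  "is_Q_centroid W F P u \<longleftrightarrow> u \<in> P \<and> (\<forall>v \<in> W - {u}. 2 * card (branch W F u v \<inter> P) \<le> card P)"
proof -
  have "real a \<le> real b / 2 \<longleftrightarrow> 2 * a \<le> b" for a b :: nat by linarith
  then show ?thesis
    unfolding is_Q_centroid_def components_delete_vertex using P_subset by auto
qed

lemma card_split_across_edge:
  assumes e: "{u, x} \<in> F"
  shows "card (branch W F u x \<inter> P) + card (branch W F x u \<inter> P) = card P"
proof -
  have "u \<noteq> x" "u \<in> W" "x \<in> W" using forest.edgeD[OF forest e] by auto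
  then have "P = (branch W F u x \<inter> P) \<union> (branch W F x u \<inter> P)"
    using branch_Un_branch[OF connected] P_subset by blast
  moreover have "(branch W F u x \<inter> P) \<inter> (branch W F x u \<inter> P) = {}"
    using forest.branches_across_edge_disjoint[OF forest e] by blast
  ultimately show ?thesis
    using finite_P card_Un_disjoint by (metis finite_Int)
qed

lemma two_centroids_halve:
  assumes u: "is_Q_centroid W F P u" and v: "is_Q_centroid W F P v" and "u \<noteq> v"
  shows "2 * card (branch W F u v \<inter> P) = card P"
    and "branch W F u v \<inter> branch W F v u \<inter> P = {}"
proof -
  let ?A = "branch W F u v \<inter> P" and ?B = "branch W F v u \<inter> P"
  have "u \<in> W" "v \<in> W" using u v P_subset by (auto simp: is_Q_centroid_iff)
  then have "2 * card ?A \<le> card P" "2 * card ?B \<le> card P"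
    using u v \<open>u \<noteq> v\<close> by (auto simp: is_Q_centroid_iff)
  moreover have "P = ?A \<union> ?B"
    using branch_Un_branch[OF connected \<open>u \<in> W\<close> \<open>v \<in> W\<close> \<open>u \<noteq> v\<close>] P_subset by blast
  then have "card P + card (?A \<inter> ?B) = card ?A + card ?B"
    using finite_P card_Un_Int by (metis finite_Int)
  ultimately have "card (?A \<inter> ?B) = 0" "2 * card ?A = card P" by linarith+
  then show "2 * card ?A = card P" "branch W F u v \<inter> branch W F v u \<inter> P = {}"
    using finite_P by (auto simp: Int_ac)
qed

lemma centroids_in_one_branch:
  assumes u: "is_Q_centroid W F P u" and v: "is_Q_centroid W F P v" and w: "is_Q_centroid W F P w"
    and "u \<noteq> v" "u \<noteq> w"
  shows "branch W F u v = branch W F u w"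
proof (rule ccontr)
  let ?A = "branch W F u v \<inter> P" and ?B = "branch W F u w \<inter> P"
  assume "branch W F u v \<noteq> branch W F u w"
  then have "branch W F u v \<inter> branch W F u w = {}" by (rule branches_disjoint)
  then have "card (?A \<union> ?B) = card ?A + card ?B"
    using finite_P by (intro card_Un_disjoint) auto
  moreover have "?A \<union> ?B \<subseteq> P - {u}"
    using branch_subset[of W F u v] branch_subset[of W F u w] by blast
  then have "card (?A \<union> ?B) < card P"
    using u finite_P unfolding is_Q_centroid_def by (meson card_Diff1_less card_mono finite_Diff le_less_trans)
  ultimately show False
    using two_centroids_halve(1)[OF u v] two_centroids_halve(1)[OF u w] assms(4,5) by linarith
qed

lemma card_Q_centroids_le_2: "card {u. is_Q_centroid W F P u} \<le> 2"
proof (rule ccontr)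
  assume "\<not> ?thesis"
  then have "3 \<le> card {u. is_Q_centroid W F P u}" by simp
  then obtain S where "S \<subseteq> {u. is_Q_centroid W F P u}" "card S = 3"
    by (rule obtain_subset_with_card_n)
  then obtain u v w where "is_Q_centroid W F P u" "is_Q_centroid W F P v" "is_Q_centroid W F P w"
    and "u \<noteq> v" "u \<noteq> w" "v \<noteq> w"
    by (auto simp: card_3_iff)
  moreover from this have "w \<in> P" "w \<in> branch W F u w" "w \<in> branch W F v w"
    using self_in_branch[of w W] by (auto simp: is_Q_centroid_def)
  ultimately show False
    using two_centroids_halve(2) centroids_in_one_branch by (metis IntI empty_iff)
qed

lemma heavy_branch_beside_light_branch:
  assumes x: "x \<in> W" "x \<notin> P" and few: "card (Q_components W F P x) \<le> 2"
    and light: "2 * card (branch W F x u \<inter> P) \<le> card P"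
  obtains v where "v \<in> W - {x}" "branch W F x v \<noteq> branch W F x u"
    "card P \<le> 2 * card (branch W F x v \<inter> P)"
proof -
  let ?K = "Q_components W F P x"
  have K: "?K = {C \<in> branch W F x ` (W - {x}). C \<inter> P \<noteq> {}}"
    unfolding Q_components_def components_delete_vertex ..
  have "finite ?K" unfolding K using finite_W by simp
  moreover have "P \<subseteq> \<Union>?K"
  proof
    fix p assume "p \<in> P"
    then have "p \<in> W - {x}" using P_subset x by auto
    moreover from this have "p \<in> branch W F x p" by (auto intro: self_in_branch)
    ultimately show "p \<in> \<Union>?K" unfolding K using \<open>p \<in> P\<close> by blast
  qed
  moreover have "pairwise disjnt ?K" unfolding K using pairwise_disjnt_branches
    by (rule pairwise_subset) blast
  ultimately obtain C where "C \<in> ?K" "C \<noteq> branch W F x u" "card P \<le> 2 * card (C \<inter> P)"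
    using other_part_holds_half[OF finite_P _ P_nonempty few _ _ light] by blast
  then show ?thesis using that unfolding K by blast
qed

text \<open>Strict heaviness is only demanded at nodes of P: at a node outside P both sides of
  an edge may hold exactly half of P, and the walk has to pass through it.\<close>

definition heavy_edge :: "'a \<Rightarrow> 'a \<Rightarrow> bool" where
  "heavy_edge u x \<longleftrightarrow> {u, x} \<in> F \<and> card P \<le> 2 * card (branch W F u x \<inter> P) \<and>
     (u \<in> P \<longrightarrow> card P < 2 * card (branch W F u x \<inter> P))"

lemma heavy_edge_step:
  assumes heavy: "heavy_edge u x" and not_centroid: "\<not> is_Q_centroid W F P x"
    and few: "x \<notin> P \<Longrightarrow> card (Q_components W F P x) \<le> 2"
  obtains y where "heavy_edge x y" "branch W F x y \<subset> branch W F u x"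
proof -
  have e: "{u, x} \<in> F" using heavy unfolding heavy_edge_def by blast
  have ux: "u \<noteq> x" "u \<in> W" "x \<in> W" using forest.edgeD[OF forest e] by auto
  have light: "2 * card (branch W F x u \<inter> P) \<le> card P"
    using card_split_across_edge[OF e] heavy unfolding heavy_edge_def by linarith
  obtain v where v: "v \<in> W - {x}" "branch W F x v \<noteq> branch W F x u"
    "card P \<le> 2 * card (branch W F x v \<inter> P)" "x \<in> P \<longrightarrow> card P < 2 * card (branch W F x v \<inter> P)"
  proof (cases "\<exists>v \<in> W - {x}. card P < 2 * card (branch W F x v \<inter> P)")
    case True
    then obtain v where "v \<in> W - {x}" "card P < 2 * card (branch W F x v \<inter> P)" by blast
    moreover from this have "branch W F x v \<noteq> branch W F x u" using light by auto
    ultimately show ?thesis using that by simp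
  next
    case False
    then have "x \<notin> P" using not_centroid by (auto simp: is_Q_centroid_iff not_less)
    with heavy_branch_beside_light_branch[OF ux(3) this few[OF this] light] that show ?thesis
      by blast
  qed
  obtain y where y: "{x, y} \<in> F" "branch W F x y = branch W F x v"
    using neighbour_in_branch[OF connected ux(3)] v(1) by blast
  have "branch W F x y \<subseteq> branch W F u x"
  proof
    fix z assume z: "z \<in> branch W F x y"
    then have "z \<in> W" using branch_subset[of W F x y] by blast
    moreover have "z \<notin> branch W F x u"
      using z y(2) branches_disjoint[OF v(2)] by blast
    ultimately show "z \<in> branch W F u x" using branch_Un_branch[OF connected ux(2,3,1)] by blast
  qed
  moreover have "x \<in> branch W F u x" using self_in_branch ux by metis
  moreover have "x \<notin> branch W F x y" using branch_subset[of W F x y] by blast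
  ultimately have "branch W F x y \<subset> branch W F u x" by blast
  moreover have "heavy_edge x y" unfolding heavy_edge_def using y v by simp
  ultimately show ?thesis using that by blast
qed

lemma Q_centroid_exists:
  assumes few: "\<forall>x \<in> W - P. card (Q_components W F P x) \<le> 2"
  shows "\<exists>u. is_Q_centroid W F P u"
proof (rule ccontr)
  assume none: "\<nexists>u. is_Q_centroid W F P u"
  have no_heavy: "\<not> heavy_edge u x" for u x
  proof (induction "card (branch W F u x)" arbitrary: u x rule: less_induct)
    case less
    show ?case
    proof
      assume heavy: "heavy_edge u x"
      then have "x \<in> W" using forest.edgeD[OF forest] unfolding heavy_edge_def by blast
      then obtain y where "heavy_edge x y" "branch W F x y \<subset> branch W F u x"
        using heavy_edge_step[OF heavy] none few by blast
      moreover from this have "card (branch W F x y) < card (branch W F u x)"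
        using finite_branch[OF finite_W] by (meson psubset_card_mono)
      ultimately show False using less by blast
    qed
  qed
  obtain p where p: "p \<in> P" using P_nonempty by blast
  then obtain v where v: "v \<in> W - {p}" "card P < 2 * card (branch W F p v \<inter> P)"
    using none by (auto simp: is_Q_centroid_iff not_le)
  obtain y where "{p, y} \<in> F" "branch W F p y = branch W F p v"
    using neighbour_in_branch[OF connected] v(1) p P_subset by blast
  then have "heavy_edge p y" unfolding heavy_edge_def using v by simp
  then show False using no_heavy by blast
qed

theorem card_Q_centroids:
  assumes "\<forall>x \<in> W - P. card (Q_components W F P x) \<le> 2"
  shows "card {u. is_Q_centroid W F P u} \<in> {1, 2}"
proof -
  have "finite {u. is_Q_centroid W F P u}"
    using finite_P by (rule finite_subset[rotated]) (auto simp: is_Q_centroid_def)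
  moreover have "{u. is_Q_centroid W F P u} \<noteq> {}" using Q_centroid_exists[OF assms] by blast
  ultimately have "card {u. is_Q_centroid W F P u} > 0" by (simp add: card_gt_0_iff)
  then show ?thesis using card_Q_centroids_le_2 by auto
qed

end

theorem mainTheorem7:
  fixes V :: "'a set" and E :: "'a set set" and r :: 'a and Q :: "'a set"
    and VZ :: "'a set" and EZ :: "'a set set"
  assumes "tree V E"
    and "r \<in> V"
    and "Q \<subseteq> V" and "Q \<noteq> {}"
    and "connected_subgraph V E VZ EZ"
    and "(Q \<union> A_Q V E r Q) \<inter> VZ \<noteq> {}"
  shows "card {u. is_Q_centroid VZ EZ ((Q \<union> A_Q V E r Q) \<inter> VZ) u} \<in> {1, 2}"
proof -
  let ?P = "(Q \<union> A_Q V E r Q) \<inter> VZ"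
  interpret T: forest V E using assms(1) by (rule forest_if_tree)
  have "tree VZ EZ" using assms(1,5) by (rule tree_if_connected_subgraph)
  then interpret Z: tree_with_terminals VZ EZ ?P
    using assms(6) by unfold_locales auto
  have "\<forall>x \<in> VZ - ?P. card (Q_components VZ EZ ?P x) \<le> 2"
    using T.card_Q'_components_le_2[OF assms(5,3)] by blast
  then show ?thesis by (rule Z.card_Q_centroids)
qed

end
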